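(* Let $H_1\in\mathbb{H}^{n\times n}$ and $H_2\in\mathbb{H}^{m\times m}$ be invertible Hermitian quaternion matrices defining indefinite inner products $[x,y]_1=y^*H_1x$ on $\mathbb{H}^n$ and $[x,y]_2=y^*H_2x$ on $\mathbb{H}^m$. Let $X,Y:\mathbb{H}^n\to\mathbb{H}^m$ be linear transformations (i.e. $X,Y\in\mathbb{H}^{m\times n}$). Then $Y$ can be written in the form $Y=UX$, where $U$ is an injective $H_2$-isometry from $\mathrm{Im}\,X$ to $\mathrm{Im}\,Y$, if and only if both $$Y^{[*]}Y=X^{[*]}X\qquad\text{and}\qquad \mathrm{Ker}\,X=\mathrm{Ker}\,Y$$ hold.
   Context: $\mathbb{H}$ denotes the real quaternions; $\mathbb{H}^n$ is regarded as a right vector space over $\mathbb{H}$ (scalars multiply from the right), and matrices act on column vectors by left multiplication. For a quaternion matrix $A$, $A^*$ is its conjugate transpose; $A$ is Hermitian if $A^*=A$. For $X:\mathbb{H}^n\to\mathbb{H}^m$, the $H_1$-$H_2$-adjoint $X^{[*]}:\mathbb{H}^m\to\mathbb{H}^n$ is defined by $[X^{[*]}y,x]_1=[y,Xx]_2$ for all $x,y$; equivalently $X^{[*]}=H_1^{-1}X^*H_2$ (and similarly for $Y$). For subspaces $V,W\subseteq\mathbb{H}^m$, a linear map $U:V\to W$ is an $H_2$-isometry if $[Ux,Uy]_2=[x,y]_2$ for all $x,y\in V$. *)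

theory Defs
  imports "HOL-Analysis.Analysis"
begin

codatatype quat = Quat (qRe: real) (qI: real) (qJ: real) (qK: real)

lemma quat_eq_iff: "x = y \<longleftrightarrow> qRe x = qRe y \<and> qI x = qI y \<and> qJ x = qJ y \<and> qK x = qK y"
  by (metis quat.expand)

instantiation quat :: ring_1
begin

definition "0 = Quat 0 0 0 0"
definition "1 = Quat 1 0 0 0"
definition "x + y = Quat (qRe x + qRe y) (qI x + qI y) (qJ x + qJ y) (qK x + qK y)"
definition "- x = Quat (- qRe x) (- qI x) (- qJ x) (- qK x)"
definition "x - y = Quat (qRe x - qRe y) (qI x - qI y) (qJ x - qJ y) (qK x - qK y)"
definition "x * y = Quat
   (qRe x * qRe y - qI x * qI y - qJ x * qJ y - qK x * qK y)
   (qRe x * qI y + qI x * qRe y + qJ x * qK y - qK x * qJ y)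
   (qRe x * qJ y - qI x * qK y + qJ x * qRe y + qK x * qI y)
   (qRe x * qK y + qI x * qJ y - qJ x * qI y + qK x * qRe y)"

instance
  by standard (auto simp: quat_eq_iff zero_quat_def one_quat_def plus_quat_def
      uminus_quat_def minus_quat_def times_quat_def algebra_simps)

end

definition qcnj :: "quat \<Rightarrow> quat" where
  "qcnj x = Quat (qRe x) (- qI x) (- qJ x) (- qK x)"

text \<open>Vectors in H^n are elements of quat^'n (index type 'n with CARD('n) = n),
  matrices in H^{m x n} are elements of quat^'n^'m (rows indexed by 'm).
  H^n is a right H-vector space: scalars multiply from the right.\<close>

definition qrscale :: "quat^'n \<Rightarrow> quat \<Rightarrow> quat^'n" where
  "qrscale v c = (\<chi> i. v $ i * c)"

definition cjtranspose :: "quat^'n^'m \<Rightarrow> quat^'m^'n" where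
  "cjtranspose A = (\<chi> i j. qcnj (A $ j $ i))"

definition hermitian :: "quat^'n^'n \<Rightarrow> bool" where
  "hermitian A \<longleftrightarrow> cjtranspose A = A"

definition qinner :: "quat^'n^'n \<Rightarrow> quat^'n \<Rightarrow> quat^'n \<Rightarrow> quat" where
  "qinner H x y = (\<Sum>i\<in>UNIV. qcnj (y $ i) * ((H *v x) $ i))"

definition hadjoint :: "quat^'n^'n \<Rightarrow> quat^'m^'m \<Rightarrow> quat^'n^'m \<Rightarrow> quat^'m^'n" where
  "hadjoint H1 H2 X = matrix_inv H1 ** cjtranspose X ** H2"

definition qker :: "quat^'n^'m \<Rightarrow> (quat^'n) set" where
  "qker X = {x. X *v x = 0}"

definition qim :: "quat^'n^'m \<Rightarrow> (quat^'m) set" where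
  "qim X = range (\<lambda>x. X *v x)"

definition qlinear_on :: "(quat^'m) set \<Rightarrow> (quat^'m \<Rightarrow> quat^'m) \<Rightarrow> bool" where
  "qlinear_on V U \<longleftrightarrow>
     (\<forall>x\<in>V. \<forall>y\<in>V. U (x + y) = U x + U y) \<and>
     (\<forall>x\<in>V. \<forall>c. U (qrscale x c) = qrscale (U x) c)"

definition inj_isometry_on :: "quat^'m^'m \<Rightarrow> (quat^'m) set \<Rightarrow> (quat^'m) set
    \<Rightarrow> (quat^'m \<Rightarrow> quat^'m) \<Rightarrow> bool" where
  "inj_isometry_on H V W U \<longleftrightarrow>
     qlinear_on V U \<and> U ` V \<subseteq> W \<and> inj_on U V \<and>
     (\<forall>x\<in>V. \<forall>y\<in>V. qinner H (U x) (U y) = qinner H x y)"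

end

theory Submission
  imports Defs
begin

text \<open>Both conditions only involve the Gram matrix \<open>X\<^sup>* H\<^sub>2 X\<close>, which determines
  \<open>[X x, X y]\<^sub>2\<close> for all \<open>x, y\<close>, and the kernel. Given equal kernels, \<open>U (X x) := Y x\<close>
  is a well-defined injective linear map on \<open>Im X\<close>, and equal Gram matrices make
  it an \<open>H\<^sub>2\<close>-isometry; conversely an isometric factorisation \<open>Y = U X\<close> forces both.
  Neither direction uses that \<open>H\<^sub>1\<close> and \<open>H\<^sub>2\<close> are Hermitian.\<close>

lemma qcnj_mult: "qcnj (a * b) = qcnj b * qcnj a"
  by (simp add: quat_eq_iff times_quat_def qcnj_def algebra_simps)

lemma qcnj_add: "qcnj (a + b) = qcnj a + qcnj b"
  by (simp add: quat_eq_iff plus_quat_def qcnj_def)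

lemma qcnj_0 [simp]: "qcnj 0 = 0"
  by (simp add: quat_eq_iff zero_quat_def qcnj_def)

lemma qcnj_1 [simp]: "qcnj 1 = 1"
  by (simp add: quat_eq_iff one_quat_def qcnj_def)

lemma qcnj_sum: "qcnj (sum f S) = (\<Sum>i\<in>S. qcnj (f i))"
  by (induction S rule: infinite_finite_induct) (auto simp: qcnj_add)

lemma sum_qcnj_matrix_vector_mult:
  "(\<Sum>i\<in>UNIV. qcnj ((A *v y) $ i) * z $ i) = (\<Sum>j\<in>UNIV. qcnj (y $ j) * (cjtranspose A *v z) $ j)"
proof -
  have "(\<Sum>i\<in>UNIV. qcnj ((A *v y) $ i) * z $ i)
      = (\<Sum>i\<in>UNIV. \<Sum>j\<in>UNIV. qcnj (y $ j) * (qcnj (A $ i $ j) * z $ i))"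
    by (simp add: matrix_vector_mult_def qcnj_sum qcnj_mult sum_distrib_right mult.assoc)
  also have "\<dots> = (\<Sum>j\<in>UNIV. \<Sum>i\<in>UNIV. qcnj (y $ j) * (qcnj (A $ i $ j) * z $ i))"
    by (rule sum.swap)
  also have "\<dots> = (\<Sum>j\<in>UNIV. qcnj (y $ j) * (cjtranspose A *v z) $ j)"
    by (simp add: matrix_vector_mult_def cjtranspose_def sum_distrib_left)
  finally show ?thesis .
qed

lemma qinner_matrix_vector_mult:
  "qinner H (A *v x) (A *v y) = qinner (cjtranspose A ** H ** A) x y"
  unfolding qinner_def
  by (simp add: sum_qcnj_matrix_vector_mult matrix_vector_mul_assoc[symmetric])

lemma qinner_axis: "qinner G (axis j 1) (axis i 1) = G $ i $ j"
proof -
  have "(G *v axis j 1) $ k = G $ k $ j" for k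
    by (simp add: matrix_vector_mult_def axis_def if_distrib cong: if_cong)
  moreover have "(\<Sum>k\<in>UNIV. qcnj (axis i 1 $ k) * G $ k $ j) = G $ i $ j"
    by (subst sum.remove[of _ i]) (auto simp: axis_def)
  ultimately show ?thesis
    by (simp add: qinner_def)
qed

lemma qinner_eqI: "(\<And>x y. qinner G x y = qinner G' x y) \<Longrightarrow> G = G'"
  by (metis qinner_axis vec_eq_iff)

lemma qrscale_matrix_vector_mult: "qrscale (X *v a) c = X *v qrscale a c"
  by (simp add: qrscale_def matrix_vector_mult_def vec_eq_iff sum_distrib_right mult.assoc)

lemma zero_in_qim: "0 \<in> qim X"
  unfolding qim_def by (metis matrix_vector_mult_0_right rangeI)

lemma matrix_vector_mult_eq_iff_diff_in_qker: "X *v a = X *v b \<longleftrightarrow> a - b \<in> qker X"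
  by (simp add: qker_def matrix_vector_mult_diff_distrib)

lemma qlinear_on_zero: "qlinear_on V U \<Longrightarrow> 0 \<in> V \<Longrightarrow> U 0 = 0"
  unfolding qlinear_on_def by (metis add_cancel_right_right add_0)

lemma hadjoint_gram_eq_iff:
  fixes H1 :: "quat^'n^'n" and H2 :: "quat^'m^'m" and X Y :: "quat^'n^'m"
  assumes "invertible H1"
  shows "hadjoint H1 H2 Y ** Y = hadjoint H1 H2 X ** X \<longleftrightarrow>
     cjtranspose Y ** H2 ** Y = cjtranspose X ** H2 ** X"
proof -
  have inv: "H1 ** matrix_inv H1 = mat 1 \<and> matrix_inv H1 ** H1 = mat 1"
    using assms unfolding invertible_def matrix_inv_def by (rule someI_ex)
  have gram: "hadjoint H1 H2 Z ** Z = matrix_inv H1 ** (cjtranspose Z ** H2 ** Z)"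
    for Z :: "quat^'n^'m"
    by (simp add: hadjoint_def matrix_mul_assoc)
  have cancel: "H1 ** (matrix_inv H1 ** M) = M" for M :: "quat^'n^'n"
    by (simp add: matrix_mul_assoc inv)
  show ?thesis
    unfolding gram by (metis cancel)
qed

lemma inj_isometry_on_factor_imp_gram_eq:
  assumes "inj_isometry_on H (qim X) W U" and "\<And>x. Y *v x = U (X *v x)"
  shows "cjtranspose Y ** H ** Y = cjtranspose X ** H ** X"
proof (rule qinner_eqI)
  fix x y
  have "qinner H (U (X *v x)) (U (X *v y)) = qinner H (X *v x) (X *v y)"
    using assms(1) unfolding inj_isometry_on_def qim_def by blast
  then show "qinner (cjtranspose Y ** H ** Y) x y = qinner (cjtranspose X ** H ** X) x y"
    by (simp add: qinner_matrix_vector_mult[symmetric] assms(2))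
qed

lemma inj_isometry_on_factor_imp_qker_eq:
  assumes "inj_isometry_on H (qim X) W U" and "\<And>x. Y *v x = U (X *v x)"
  shows "qker X = qker Y"
proof -
  have lin: "qlinear_on (qim X) U" and inj: "inj_on U (qim X)"
    using assms(1) unfolding inj_isometry_on_def by blast+
  have "X *v x = 0 \<longleftrightarrow> U (X *v x) = U 0" for x
    using inj_on_eq_iff[OF inj _ zero_in_qim] by (simp add: qim_def)
  then show ?thesis
    using qlinear_on_zero[OF lin zero_in_qim] by (simp add: qker_def assms(2))
qed

lemma qker_eq_imp_factor:
  assumes "qker X = qker Y"
  obtains U where "\<And>a. U (X *v a) = Y *v a" and "inj_on U (qim X)"
proof
  have same_fibres: "X *v a = X *v b \<longleftrightarrow> Y *v a = Y *v b" for a b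
    using assms by (simp add: matrix_vector_mult_eq_iff_diff_in_qker)
  define U where "U v = Y *v (SOME a. X *v a = v)" for v
  show UX: "U (X *v a) = Y *v a" for a
  proof -
    have "X *v (SOME b. X *v b = X *v a) = X *v a"
      by (rule someI) (rule refl)
    then show ?thesis
      unfolding U_def using same_fibres by blast
  qed
  show "inj_on U (qim X)"
    by (auto simp: qim_def UX same_fibres intro!: inj_onI)
qed

lemma inj_isometry_on_factorI:
  assumes UX: "\<And>a. U (X *v a) = Y *v a" and inj: "inj_on U (qim X)"
    and gram: "cjtranspose Y ** H ** Y = cjtranspose X ** H ** X"
  shows "inj_isometry_on H (qim X) (qim Y) U"
  unfolding inj_isometry_on_def qlinear_on_def
proof (intro conjI ballI allI)
  fix v w assume "v \<in> qim X" "w \<in> qim X"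
  then obtain a b where v: "v = X *v a" and w: "w = X *v b"
    by (auto simp: qim_def)
  show "U (v + w) = U v + U w"
    unfolding v w by (metis UX matrix_vector_right_distrib)
  show "qinner H (U v) (U w) = qinner H v w"
    unfolding v w by (simp add: UX qinner_matrix_vector_mult gram)
next
  fix v c assume "v \<in> qim X"
  then obtain a where "v = X *v a"
    by (auto simp: qim_def)
  then show "U (qrscale v c) = qrscale (U v) c"
    by (simp add: UX qrscale_matrix_vector_mult)
next
  show "U ` qim X \<subseteq> qim Y"
    by (auto simp: qim_def UX)
qed (fact inj)

theorem lemma4p1:
  fixes H1 :: "quat^'n^'n" and H2 :: "quat^'m^'m" and X Y :: "quat^'n^'m"
  assumes "hermitian H1" and "invertible H1"
    and "hermitian H2" and "invertible H2"
  shows "(\<exists>U. inj_isometry_on H2 (qim X) (qim Y) U \<and> (\<forall>x. Y *v x = U (X *v x)))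
     \<longleftrightarrow> (hadjoint H1 H2 Y ** Y = hadjoint H1 H2 X ** X \<and> qker X = qker Y)"
  unfolding hadjoint_gram_eq_iff[OF assms(2)]
proof
  assume "\<exists>U. inj_isometry_on H2 (qim X) (qim Y) U \<and> (\<forall>x. Y *v x = U (X *v x))"
  then show "cjtranspose Y ** H2 ** Y = cjtranspose X ** H2 ** X \<and> qker X = qker Y"
    using inj_isometry_on_factor_imp_gram_eq inj_isometry_on_factor_imp_qker_eq by metis
next
  assume gram_ker: "cjtranspose Y ** H2 ** Y = cjtranspose X ** H2 ** X \<and> qker X = qker Y"
  then obtain U where "\<And>a. U (X *v a) = Y *v a" and "inj_on U (qim X)"
    using qker_eq_imp_factor by blast
  then show "\<exists>U. inj_isometry_on H2 (qim X) (qim Y) U \<and> (\<forall>x. Y *v x = U (X *v x))"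
    using inj_isometry_on_factorI gram_ker by metis
qed

end
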